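(* Let $\mathbb X$ be a basic space and $\mathcal D=(D,<,\rho)$ a computable partially ordered set. Every partial function in $\mathrm{Max}_{\mathrm{PR}}[\mathbb X\to\mathcal D]$ or in $\mathrm{Min}_{\mathrm{PR}}[\mathbb X\to\mathcal D]$ has a $\Sigma^0_1\wedge\Pi^0_1$ graph and a $\Sigma^0_2$ domain.
   Context: A basic space is a finite non-empty product of sets each of which is $\mathbb N$, $\mathbb Z$, or $A^*$ for some finite alphabet $A$. A computable partially ordered set is a triple $\mathcal D=(D,<,\rho)$ where $\rho:\mathbb N\to D$ is a bijection and $<$ is a strict partial order on $D$ with $\{(m,n):\rho(m)<\rho(n)\}$ computable; a partial function into $D$ is partial computable if its composition with $\rho^{-1}$ is. For a partial $f:\mathbb X\times\mathbb N\to D$ monotone increasing (resp. decreasing) in its second argument on its domain, $\max^{\mathcal D}f$ (resp. $\min^{\mathcal D}f$) is the partial function defined exactly at those $x$ for which $\{f(x,t):t,\ f(x,t)\text{ defined}\}$ is finite and non-empty, with value its maximum (resp. minimum). $\mathrm{Max}_{\mathrm{PR}}[\mathbb X\to\mathcal D]$ (resp. $\mathrm{Min}_{\mathrm{PR}}[\mathbb X\to\mathcal D]$) is the class of all $\max^{\mathcal D}f$ (resp. $\min^{\mathcal D}f$) with $f$ partial computable and monotone increasing (resp. decreasing) in its second argument. A relation $R\subseteq\mathbb X\times D$ is $\Sigma^0_n$, $\Pi^0_n$, or $\Sigma^0_1\wedge\Pi^0_1$ (conjunction of a $\Sigma^0_1$ and a $\Pi^0_1$ relation) if so is $\{(x,n):(x,\rho(n))\in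 R\}\subseteq\mathbb X\times\mathbb N$ in the arithmetical hierarchy. *)

theory Defs
  imports Main "HOL-Library.Nat_Bijection"
begin

datatype recf = Zero | Succ | Proj nat | Comp recf "recf list" | Prim recf recf | Mn recf

inductive eval :: "recf \<Rightarrow> nat list \<Rightarrow> nat \<Rightarrow> bool" where
  eval_Zero: "eval Zero xs 0"
| eval_Succ: "eval Succ (x # xs) (Suc x)"
| eval_Proj: "i < length xs \<Longrightarrow> eval (Proj i) xs (xs ! i)"
| eval_Comp: "length ys = length gs \<Longrightarrow> (\<forall>i < length gs. eval (gs ! i) xs (ys ! i))
      \<Longrightarrow> eval f ys z \<Longrightarrow> eval (Comp f gs) xs z"
| eval_Prim0: "eval f xs y \<Longrightarrow> eval (Prim f g) (0 # xs) y"
| eval_PrimS: "eval (Prim f g) (n # xs) y \<Longrightarrow> eval g (y # n # xs) z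
      \<Longrightarrow> eval (Prim f g) (Suc n # xs) z"
| eval_Mn: "eval f (n # xs) 0 \<Longrightarrow> (\<forall>m < n. \<exists>k. k \<noteq> 0 \<and> eval f (m # xs) k)
      \<Longrightarrow> eval (Mn f) xs n"

definition partrec :: "(nat \<Rightarrow> nat option) \<Rightarrow> bool" where
  "partrec \<phi> \<longleftrightarrow> (\<exists>r. \<forall>x y. eval r [x] y \<longleftrightarrow> \<phi> x = Some y)"

definition computable_set :: "nat set \<Rightarrow> bool" where
  "computable_set A \<longleftrightarrow> partrec (\<lambda>x. Some (if x \<in> A then 1 else 0))"

fun Sigma :: "nat \<Rightarrow> nat set \<Rightarrow> bool" where
  "Sigma 0 A = computable_set A"
| "Sigma (Suc n) A = (\<exists>P. Sigma n (- P) \<and> A = {c. \<exists>m. prod_encode (c, m) \<in> P})"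

definition Pi :: "nat \<Rightarrow> nat set \<Rightarrow> bool" where
  "Pi n A \<longleftrightarrow> Sigma n (- A)"

text \<open>Component kinds: N, Z, or A* for a finite alphabet A, identified with {0..<k}, k = |A|.\<close>
datatype bkind = KN | KZ | KW nat
datatype bval = VN nat | VZ int | VW "nat list"

fun in_kind :: "bkind \<Rightarrow> bval \<Rightarrow> bool" where
  "in_kind KN (VN _) = True"
| "in_kind KZ (VZ _) = True"
| "in_kind (KW k) (VW w) = (\<forall>a \<in> set w. a < k)"
| "in_kind _ _ = False"

text \<open>The basic space with component list ks (a basic space requires ks nonempty).\<close>
definition bspace :: "bkind list \<Rightarrow> bval list set" where
  "bspace ks = {xs. list_all2 in_kind ks xs}"

fun code_val :: "bval \<Rightarrow> nat" where
  "code_val (VN n) = n"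
| "code_val (VZ i) = int_encode i"
| "code_val (VW w) = list_encode w"

text \<open>Standard (computable, injective on each basic space) coding of points by naturals.\<close>
definition code :: "bval list \<Rightarrow> nat" where
  "code xs = list_encode (map code_val xs)"

definition comp_poset :: "('d \<Rightarrow> 'd \<Rightarrow> bool) \<Rightarrow> (nat \<Rightarrow> 'd) \<Rightarrow> bool" where
  "comp_poset lt \<rho> \<longleftrightarrow> bij \<rho> \<and> (\<forall>x. \<not> lt x x) \<and>
     (\<forall>x y z. lt x y \<longrightarrow> lt y z \<longrightarrow> lt x z) \<and>
     computable_set {c. lt (\<rho> (fst (prod_decode c))) (\<rho> (snd (prod_decode c)))}"

definition pcomp2 :: "bkind list \<Rightarrow> (nat \<Rightarrow> 'd) \<Rightarrow> (bval list \<Rightarrow> nat \<Rightarrow> 'd option) \<Rightarrow> bool" where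
  "pcomp2 ks \<rho> f \<longleftrightarrow> (\<exists>\<phi>. partrec \<phi> \<and>
     (\<forall>x \<in> bspace ks. \<forall>t. \<phi> (prod_encode (code x, t)) = map_option (inv \<rho>) (f x t)))"

definition mono_incr :: "bkind list \<Rightarrow> ('d \<Rightarrow> 'd \<Rightarrow> bool) \<Rightarrow> (bval list \<Rightarrow> nat \<Rightarrow> 'd option) \<Rightarrow> bool" where
  "mono_incr ks lt f \<longleftrightarrow> (\<forall>x \<in> bspace ks. \<forall>t t' a b. t \<le> t' \<longrightarrow> f x t = Some a \<longrightarrow>
      f x t' = Some b \<longrightarrow> (a = b \<or> lt a b))"

definition mono_decr :: "bkind list \<Rightarrow> ('d \<Rightarrow> 'd \<Rightarrow> bool) \<Rightarrow> (bval list \<Rightarrow> nat \<Rightarrow> 'd option) \<Rightarrow> bool" where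
  "mono_decr ks lt f \<longleftrightarrow> (\<forall>x \<in> bspace ks. \<forall>t t' a b. t \<le> t' \<longrightarrow> f x t = Some a \<longrightarrow>
      f x t' = Some b \<longrightarrow> (a = b \<or> lt b a))"

definition values_at :: "(bval list \<Rightarrow> nat \<Rightarrow> 'd option) \<Rightarrow> bval list \<Rightarrow> 'd set" where
  "values_at f x = {v. \<exists>t. f x t = Some v}"

definition maxD :: "('d \<Rightarrow> 'd \<Rightarrow> bool) \<Rightarrow> (bval list \<Rightarrow> nat \<Rightarrow> 'd option) \<Rightarrow> bval list \<Rightarrow> 'd option" where
  "maxD lt f x = (if finite (values_at f x) \<and> values_at f x \<noteq> {}
     then Some (THE v. v \<in> values_at f x \<and> (\<forall>w \<in> values_at f x. w = v \<or> lt w v)) else None)"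

definition minD :: "('d \<Rightarrow> 'd \<Rightarrow> bool) \<Rightarrow> (bval list \<Rightarrow> nat \<Rightarrow> 'd option) \<Rightarrow> bval list \<Rightarrow> 'd option" where
  "minD lt f x = (if finite (values_at f x) \<and> values_at f x \<noteq> {}
     then Some (THE v. v \<in> values_at f x \<and> (\<forall>w \<in> values_at f x. w = v \<or> lt v w)) else None)"

text \<open>Partial functions X -> D are compared only on X.\<close>
definition MaxPR :: "bkind list \<Rightarrow> ('d \<Rightarrow> 'd \<Rightarrow> bool) \<Rightarrow> (nat \<Rightarrow> 'd) \<Rightarrow> (bval list \<Rightarrow> 'd option) set" where
  "MaxPR ks lt \<rho> = {g. \<exists>f. pcomp2 ks \<rho> f \<and> mono_incr ks lt f \<and>
      (\<forall>x \<in> bspace ks. g x = maxD lt f x)}"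

definition MinPR :: "bkind list \<Rightarrow> ('d \<Rightarrow> 'd \<Rightarrow> bool) \<Rightarrow> (nat \<Rightarrow> 'd) \<Rightarrow> (bval list \<Rightarrow> 'd option) set" where
  "MinPR ks lt \<rho> = {g. \<exists>f. pcomp2 ks \<rho> f \<and> mono_decr ks lt f \<and>
      (\<forall>x \<in> bspace ks. g x = minD lt f x)}"

definition rel_Sigma :: "nat \<Rightarrow> bkind list \<Rightarrow> (nat \<Rightarrow> 'd) \<Rightarrow> (bval list \<times> 'd) set \<Rightarrow> bool" where
  "rel_Sigma n ks \<rho> R \<longleftrightarrow> (\<exists>A. Sigma n A \<and>
     (\<forall>x \<in> bspace ks. \<forall>m. (x, \<rho> m) \<in> R \<longleftrightarrow> prod_encode (code x, m) \<in> A))"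

definition rel_Pi :: "nat \<Rightarrow> bkind list \<Rightarrow> (nat \<Rightarrow> 'd) \<Rightarrow> (bval list \<times> 'd) set \<Rightarrow> bool" where
  "rel_Pi n ks \<rho> R \<longleftrightarrow> (\<exists>A. Pi n A \<and>
     (\<forall>x \<in> bspace ks. \<forall>m. (x, \<rho> m) \<in> R \<longleftrightarrow> prod_encode (code x, m) \<in> A))"

definition rel_Sigma1_and_Pi1 :: "bkind list \<Rightarrow> (nat \<Rightarrow> 'd) \<Rightarrow> (bval list \<times> 'd) set \<Rightarrow> bool" where
  "rel_Sigma1_and_Pi1 ks \<rho> R \<longleftrightarrow> (\<exists>S P. rel_Sigma 1 ks \<rho> S \<and> rel_Pi 1 ks \<rho> P \<and>
     (\<forall>x \<in> bspace ks. \<forall>d. (x, d) \<in> R \<longleftrightarrow> (x, d) \<in> S \<and> (x, d) \<in> P))"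

definition set_Sigma :: "nat \<Rightarrow> bkind list \<Rightarrow> bval list set \<Rightarrow> bool" where
  "set_Sigma n ks S \<longleftrightarrow> (\<exists>A. Sigma n A \<and> (\<forall>x \<in> bspace ks. x \<in> S \<longleftrightarrow> code x \<in> A))"

definition graph_on :: "bkind list \<Rightarrow> (bval list \<Rightarrow> 'd option) \<Rightarrow> (bval list \<times> 'd) set" where
  "graph_on ks g = {(x, d). x \<in> bspace ks \<and> g x = Some d}"

definition dom_on :: "bkind list \<Rightarrow> (bval list \<Rightarrow> 'd option) \<Rightarrow> bval list set" where
  "dom_on ks g = {x. x \<in> bspace ks \<and> g x \<noteq> None}"

end

theory Submission
  imports Defs
begin

text \<open>A value \<open>m\<close>
  is the maximum at \<open>x\<close> iff it is enumerated at some stage, a \<open>\<Sigma>\<^sub>1\<close> condition, and no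
  enumerated value \<open>v \<noteq> m\<close> fails to lie below \<open>m\<close>, a \<open>\<Pi>\<^sub>1\<close> condition because the order is
  decidable; monotonicity makes such a maximum unique and the set of values finite. Hence the graph is
  \<open>\<Sigma>\<^sub>1 \<and> \<Pi>\<^sub>1\<close>, and the domain, its projection, is \<open>\<Sigma>\<^sub>2\<close>. Minima are maxima for the converse
  order. The recursion-theoretic core is that the graph of every \<open>\<mu>\<close>-recursive term is
  \<open>\<Sigma>\<^sub>1\<close>, by induction on the term, coding finite sequences of intermediate values by iterated
  Cantor pairing.\<close>

inductive_cases eval_ZeroE: "eval Zero xs y"
inductive_cases eval_SuccE: "eval Succ xs y"
inductive_cases eval_ProjE: "eval (Proj i) xs y"
inductive_cases eval_CompE: "eval (Comp f gs) xs y"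
inductive_cases eval_MnE: "eval (Mn f) xs y"
inductive_cases eval_Prim_0E: "eval (Prim f g) (0 # xs) y"
inductive_cases eval_Prim_SucE: "eval (Prim f g) (Suc n # xs) y"
inductive_cases eval_Prim_NilE: "eval (Prim f g) [] y"

lemma eval_deterministic: "eval r xs y \<Longrightarrow> eval r xs y' \<Longrightarrow> y = y'"
proof (induction arbitrary: y' rule: eval.induct)
  case (eval_Comp ys gs xs f z)
  from eval_Comp.prems obtain ys' where "length ys' = length gs"
    and gs: "\<forall>i<length gs. eval (gs ! i) xs (ys' ! i)" and "eval f ys' y'"
    by (auto elim: eval_CompE)
  moreover have "ys = ys'"
    by (rule nth_equalityI) (use eval_Comp.hyps(1) \<open>length ys' = length gs\<close> eval_Comp.IH(1) gs in auto)
  ultimately show ?case using eval_Comp.IH(2) by simp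
next
  case (eval_Prim0 f xs y g)
  then show ?case by (blast elim: eval_Prim_0E)
next
  case (eval_PrimS f g n xs y z)
  from eval_PrimS.prems obtain y2 where "eval (Prim f g) (n # xs) y2" "eval g (y2 # n # xs) y'"
    by (rule eval_Prim_SucE)
  then show ?case using eval_PrimS.IH by metis
next
  case (eval_Mn f n xs)
  from eval_Mn.prems obtain n' where "eval f (n' # xs) 0"
    and "\<forall>m<n'. \<exists>k. k \<noteq> 0 \<and> eval f (m # xs) k" and "y' = n'"
    by (rule eval_MnE) blast
  then show ?case using eval_Mn.IH by (metis linorder_neqE_nat)
qed (auto elim: eval_ZeroE eval_SuccE eval_ProjE)

lemma eval_Zero_iff: "eval Zero xs y \<longleftrightarrow> y = 0"
  by (auto elim: eval_ZeroE intro: eval_Zero)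

lemma eval_Succ_iff: "eval Succ xs y \<longleftrightarrow> xs \<noteq> [] \<and> y = Suc (hd xs)"
  by (cases xs) (auto elim: eval_SuccE intro: eval_Succ)

lemma eval_Proj_iff: "eval (Proj i) xs y \<longleftrightarrow> i < length xs \<and> y = xs ! i"
  by (auto elim: eval_ProjE intro: eval_Proj)

lemma eval_Comp_iff: "eval (Comp f gs) xs z \<longleftrightarrow>
   (\<exists>ys. length ys = length gs \<and> (\<forall>i<length gs. eval (gs ! i) xs (ys ! i)) \<and> eval f ys z)"
  by (auto elim: eval_CompE intro: eval_Comp)

lemma eval_Mn_iff: "eval (Mn f) xs n \<longleftrightarrow> eval f (n # xs) 0 \<and> (\<forall>m<n. \<exists>k. k \<noteq> 0 \<and> eval f (m # xs) k)"
  by (auto elim: eval_MnE intro: eval_Mn)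

lemma not_eval_Prim_Nil: "\<not> eval (Prim f g) [] z"
  by (auto elim: eval_Prim_NilE)

lemma eval_Prim_iff: "eval (Prim f g) (n # xs) z \<longleftrightarrow>
   (\<exists>s. eval f xs (s 0) \<and> (\<forall>i<n. eval g (s i # i # xs) (s (Suc i))) \<and> s n = z)"
proof (induction n arbitrary: z)
  case 0
  show ?case
  proof
    assume "eval (Prim f g) (0 # xs) z"
    then show "\<exists>s. eval f xs (s 0) \<and> (\<forall>i<0. eval g (s i # i # xs) (s (Suc i))) \<and> s 0 = z"
      by (auto elim: eval_Prim_0E intro: exI[of _ "\<lambda>_. z"])
  qed (auto intro: eval_Prim0)
next
  case (Suc n)
  show ?case
  proof
    assume "eval (Prim f g) (Suc n # xs) z"
    then obtain y where y: "eval (Prim f g) (n # xs) y" "eval g (y # n # xs) z"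
      by (auto elim: eval_Prim_SucE)
    then obtain s where s: "eval f xs (s 0)" "\<forall>i<n. eval g (s i # i # xs) (s (Suc i))" "s n = y"
      using Suc.IH by blast
    then show "\<exists>s. eval f xs (s 0) \<and> (\<forall>i<Suc n. eval g (s i # i # xs) (s (Suc i))) \<and> s (Suc n) = z"
      using y by (intro exI[of _ "s(Suc n := z)"]) (auto simp: less_Suc_eq)
  next
    assume "\<exists>s. eval f xs (s 0) \<and> (\<forall>i<Suc n. eval g (s i # i # xs) (s (Suc i))) \<and> s (Suc n) = z"
    then obtain s where s: "eval f xs (s 0)" "\<forall>i<Suc n. eval g (s i # i # xs) (s (Suc i))" "s (Suc n) = z"
      by blast
    then have "eval (Prim f g) (n # xs) (s n)" using Suc.IH by auto
    then show "eval (Prim f g) (Suc n # xs) z" using s by (auto intro: eval_PrimS)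
  qed
qed

section \<open>Total recursive functions\<close>

definition total_recursive :: "nat \<Rightarrow> (nat list \<Rightarrow> nat) \<Rightarrow> bool" where
  "total_recursive k h \<longleftrightarrow> (\<exists>r. \<forall>xs. length xs = k \<longrightarrow> eval r xs (h xs))"

definition total_recursive_list :: "nat \<Rightarrow> nat \<Rightarrow> (nat list \<Rightarrow> nat list) \<Rightarrow> bool" where
  "total_recursive_list k m G \<longleftrightarrow> (\<forall>xs. length xs = k \<longrightarrow> length (G xs) = m) \<and>
     (\<forall>i<m. total_recursive k (\<lambda>xs. G xs ! i))"

lemma total_recursive_cong:
  "total_recursive k h \<Longrightarrow> (\<And>xs. length xs = k \<Longrightarrow> h xs = h' xs) \<Longrightarrow> total_recursive k h'"
  unfolding total_recursive_def by metis

fun const_recf :: "nat \<Rightarrow> recf" where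
  "const_recf 0 = Zero"
| "const_recf (Suc c) = Comp Succ [const_recf c]"

lemma eval_const_recf: "eval (const_recf c) xs c"
proof (induction c)
  case (Suc c)
  have "eval (Comp Succ [const_recf c]) xs (Suc c)"
    by (rule eval_Comp[where ys="[c]"]) (use Suc in \<open>auto intro: eval_Succ\<close>)
  then show ?case by simp
qed (simp add: eval_Zero)

lemma total_recursive_const: "total_recursive k (\<lambda>_. c)"
  unfolding total_recursive_def using eval_const_recf by blast

lemma total_recursive_nth: "i < k \<Longrightarrow> total_recursive k (\<lambda>xs. xs ! i)"
  unfolding total_recursive_def using eval_Proj by auto

lemma total_recursive_compose:
  assumes "total_recursive m f" "total_recursive_list k m G"
  shows "total_recursive k (\<lambda>xs. f (G xs))"
proof -
  obtain rf where rf: "\<forall>ys. length ys = m \<longrightarrow> eval rf ys (f ys)"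
    using assms(1) total_recursive_def by blast
  have "\<forall>i<m. \<exists>r. \<forall>xs. length xs = k \<longrightarrow> eval r xs (G xs ! i)"
    using assms(2) unfolding total_recursive_list_def total_recursive_def by blast
  then obtain rg where rg: "\<forall>i<m. \<forall>xs. length xs = k \<longrightarrow> eval (rg i) xs (G xs ! i)"
    by metis
  have "eval (Comp rf (map rg [0..<m])) xs (f (G xs))" if "length xs = k" for xs
    by (rule eval_Comp[where ys="G xs"])
      (use that assms(2) rf rg in \<open>auto simp: total_recursive_list_def\<close>)
  then show ?thesis unfolding total_recursive_def by blast
qed

lemma total_recursive_list_Nil: "total_recursive_list k 0 (\<lambda>_. [])"
  unfolding total_recursive_list_def by simp

lemma total_recursive_list_Cons:
  assumes "total_recursive k g" "total_recursive_list k m G"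
  shows "total_recursive_list k (Suc m) (\<lambda>xs. g xs # G xs)"
  unfolding total_recursive_list_def
proof (intro conjI allI impI)
  fix i assume "i < Suc m"
  then show "total_recursive k (\<lambda>xs. (g xs # G xs) ! i)"
    using assms unfolding total_recursive_list_def by (cases i) auto
qed (use assms in \<open>auto simp: total_recursive_list_def\<close>)

lemma total_recursive_list_drop: "total_recursive_list (n + m) m (\<lambda>xs. drop n xs)"
  unfolding total_recursive_list_def
proof (intro conjI allI impI)
  fix i assume "i < m"
  then show "total_recursive (n + m) (\<lambda>xs. drop n xs ! i)"
    by (intro total_recursive_cong[OF total_recursive_nth[of "n + i" "n + m"]]) auto
qed auto

lemma total_recursive_list_take: "n \<le> k \<Longrightarrow> total_recursive_list k n (\<lambda>xs. take n xs)"
  unfolding total_recursive_list_def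
proof (intro conjI allI impI)
  fix i assume "n \<le> k" "i < n"
  then show "total_recursive k (\<lambda>xs. take n xs ! i)"
    by (intro total_recursive_cong[OF total_recursive_nth[of i k]]) auto
qed auto

lemma total_recursive_list_id: "total_recursive_list k k (\<lambda>xs. xs)"
  unfolding total_recursive_list_def by (auto intro: total_recursive_nth)

lemma total_recursive_list_compose:
  assumes "total_recursive_list m n G" "total_recursive_list k m H"
  shows "total_recursive_list k n (\<lambda>xs. G (H xs))"
  unfolding total_recursive_list_def
proof (intro conjI allI impI)
  fix i assume "i < n"
  then have "total_recursive m (\<lambda>xs. G xs ! i)"
    using assms(1) unfolding total_recursive_list_def by auto
  then show "total_recursive k (\<lambda>xs. G (H xs) ! i)"
    using total_recursive_compose assms(2) by blast
qed (use assms in \<open>auto simp: total_recursive_list_def\<close>)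

lemma total_recursive_compose1:
  "total_recursive 1 h \<Longrightarrow> total_recursive k f \<Longrightarrow> total_recursive k (\<lambda>xs. h [f xs])"
  using total_recursive_compose[of 1 h k "\<lambda>xs. [f xs]"]
    total_recursive_list_Cons[OF _ total_recursive_list_Nil, of k f] by simp

lemma total_recursive_compose2:
  "total_recursive 2 h \<Longrightarrow> total_recursive k f \<Longrightarrow> total_recursive k g \<Longrightarrow>
   total_recursive k (\<lambda>xs. h [f xs, g xs])"
  using total_recursive_compose[of 2 h k "\<lambda>xs. [f xs, g xs]"]
    total_recursive_list_Cons[OF _ total_recursive_list_Cons[OF _ total_recursive_list_Nil], of k f g]
  by (simp add: numeral_2_eq_2)

definition prim_rec :: "(nat list \<Rightarrow> nat) \<Rightarrow> (nat list \<Rightarrow> nat) \<Rightarrow> nat list \<Rightarrow> nat" where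
  "prim_rec f g xs = rec_nat (f (tl xs)) (\<lambda>n y. g (y # n # tl xs)) (hd xs)"

lemma total_recursive_prim_rec:
  assumes "total_recursive k f" "total_recursive (Suc (Suc k)) g"
  shows "total_recursive (Suc k) (prim_rec f g)"
proof -
  obtain rf where rf: "\<forall>xs. length xs = k \<longrightarrow> eval rf xs (f xs)"
    using assms(1) total_recursive_def by blast
  obtain rg where rg: "\<forall>xs. length xs = Suc (Suc k) \<longrightarrow> eval rg xs (g xs)"
    using assms(2) total_recursive_def by blast
  have "eval (Prim rf rg) (n # xs) (prim_rec f g (n # xs))" if "length xs = k" for n xs
    by (induction n) (use rf rg that in \<open>auto simp: prim_rec_def intro: eval_Prim0 eval_PrimS\<close>)
  then show ?thesis unfolding total_recursive_def by (metis length_Suc_conv)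
qed


lemma total_recursive_Suc:
  assumes "total_recursive k f"
  shows "total_recursive k (\<lambda>xs. Suc (f xs))"
proof -
  have "total_recursive 1 (\<lambda>xs. Suc (xs ! 0))" unfolding total_recursive_def
    by (rule exI[of _ Succ]) (auto simp: length_Suc_conv intro: eval_Succ)
  from total_recursive_compose1[OF this assms] show ?thesis by simp
qed

lemma length_2_cases:
  assumes "length xs = 2"
  obtains a b where "xs = [a, b]"
  using assms by (auto simp: length_Suc_conv numeral_2_eq_2)

lemma total_recursive_add:
  assumes "total_recursive k f" "total_recursive k g"
  shows "total_recursive k (\<lambda>xs. f xs + g xs)"
proof -
  have "total_recursive 2 (prim_rec (\<lambda>ys. ys ! 0) (\<lambda>ys. Suc (ys ! 0)))"
    using total_recursive_prim_rec[OF total_recursive_nth[of 0 "Suc 0", simplified]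
        total_recursive_Suc[OF total_recursive_nth[of 0 "Suc (Suc (Suc 0))", simplified]]]
    by (simp add: numeral_2_eq_2 numeral_3_eq_3)
  then have "total_recursive 2 (\<lambda>xs. xs ! 0 + xs ! 1)"
  proof (rule total_recursive_cong)
    fix xs :: "nat list" assume "length xs = 2"
    then obtain a b where "xs = [a, b]" by (rule length_2_cases)
    moreover have "prim_rec (\<lambda>ys. ys ! 0) (\<lambda>ys. Suc (ys ! 0)) [a, b] = a + b"
      by (induction a) (simp_all add: prim_rec_def)
    ultimately show "prim_rec (\<lambda>ys. ys ! 0) (\<lambda>ys. Suc (ys ! 0)) xs = xs ! 0 + xs ! 1" by simp
  qed
  from total_recursive_compose2[OF this assms] show ?thesis by simp
qed

lemma total_recursive_mult:
  assumes "total_recursive k f" "total_recursive k g"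
  shows "total_recursive k (\<lambda>xs. f xs * g xs)"
proof -
  have "total_recursive 2 (prim_rec (\<lambda>ys. 0) (\<lambda>ys. ys ! 0 + ys ! 2))"
    using total_recursive_prim_rec[OF total_recursive_const
        total_recursive_add[OF total_recursive_nth[of 0 "Suc (Suc (Suc 0))", simplified] total_recursive_nth[of 2 "Suc (Suc (Suc 0))", simplified]]]
    by (simp add: numeral_2_eq_2 numeral_3_eq_3)
  then have "total_recursive 2 (\<lambda>xs. xs ! 0 * xs ! 1)"
  proof (rule total_recursive_cong)
    fix xs :: "nat list" assume "length xs = 2"
    then obtain a b where "xs = [a, b]" by (rule length_2_cases)
    moreover have "prim_rec (\<lambda>ys. 0) (\<lambda>ys. ys ! 0 + ys ! 2) [a, b] = a * b"
      by (induction a) (simp_all add: prim_rec_def)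
    ultimately show "prim_rec (\<lambda>ys. 0) (\<lambda>ys. ys ! 0 + ys ! 2) xs = xs ! 0 * xs ! 1" by simp
  qed
  from total_recursive_compose2[OF this assms] show ?thesis by simp
qed

lemma total_recursive_diff:
  assumes "total_recursive k f" "total_recursive k g"
  shows "total_recursive k (\<lambda>xs. f xs - g xs)"
proof -
  have "total_recursive 1 (prim_rec (\<lambda>ys. 0) (\<lambda>ys. ys ! 1))"
    using total_recursive_prim_rec[OF total_recursive_const[of 0 0] total_recursive_nth[of 1 "Suc (Suc 0)", simplified]] by simp
  then have pred: "total_recursive 1 (\<lambda>xs. xs ! 0 - 1)"
  proof (rule total_recursive_cong)
    fix xs :: "nat list" assume "length xs = 1"
    then obtain a where "xs = [a]" by (auto simp: length_Suc_conv)
    then show "prim_rec (\<lambda>ys. 0) (\<lambda>ys. ys ! 1) xs = xs ! 0 - 1"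
      by (cases a) (simp_all add: prim_rec_def)
  qed
  have "total_recursive 2 (prim_rec (\<lambda>ys. ys ! 0) (\<lambda>ys. ys ! 0 - 1))"
    using total_recursive_prim_rec[OF total_recursive_nth[of 0 "Suc 0", simplified]
        total_recursive_compose1[OF pred total_recursive_nth[of 0 "Suc (Suc (Suc 0))", simplified]]]
    by (simp add: numeral_2_eq_2 numeral_3_eq_3)
  then have "total_recursive 2 (\<lambda>xs. xs ! 1 - xs ! 0)"
  proof (rule total_recursive_cong)
    fix xs :: "nat list" assume "length xs = 2"
    then obtain a b where "xs = [a, b]" by (rule length_2_cases)
    moreover have "prim_rec (\<lambda>ys. ys ! 0) (\<lambda>ys. ys ! 0 - 1) [a, b] = b - a"
      by (induction a) (simp_all add: prim_rec_def)
    ultimately show "prim_rec (\<lambda>ys. ys ! 0) (\<lambda>ys. ys ! 0 - 1) xs = xs ! 1 - xs ! 0" by simp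
  qed
  from total_recursive_compose2[OF this assms(2,1)] show ?thesis by simp
qed

lemma total_recursive_sum:
  assumes "total_recursive (Suc k) f" "total_recursive k b"
  shows "total_recursive k (\<lambda>xs. \<Sum>i<b xs. f (i # xs))"
proof -
  have "total_recursive (Suc (Suc k)) (\<lambda>ys. f (ys ! 1 # drop 2 ys))"
    using total_recursive_compose[OF assms(1)
        total_recursive_list_Cons[OF total_recursive_nth[of 1 "2 + k"] total_recursive_list_drop[of 2 k]]]
    by simp
  then have "total_recursive (Suc k) (prim_rec (\<lambda>ys. 0) (\<lambda>ys. ys ! 0 + f (ys ! 1 # drop 2 ys)))"
    by (intro total_recursive_prim_rec total_recursive_const total_recursive_add total_recursive_nth) simp_all
  then have "total_recursive (Suc k) (\<lambda>xs. \<Sum>i<hd xs. f (i # tl xs))"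
  proof (rule total_recursive_cong)
    fix xs :: "nat list" assume "length xs = Suc k"
    then obtain a ys where "xs = a # ys" by (auto simp: length_Suc_conv)
    moreover have "prim_rec (\<lambda>ys. 0) (\<lambda>ys. ys ! 0 + f (ys ! 1 # drop 2 ys)) (a # ys) = (\<Sum>i<a. f (i # ys))"
      by (induction a) (simp_all add: prim_rec_def)
    ultimately show "prim_rec (\<lambda>ys. 0) (\<lambda>ys. ys ! 0 + f (ys ! 1 # drop 2 ys)) xs = (\<Sum>i<hd xs. f (i # tl xs))"
      by simp
  qed
  from total_recursive_compose[OF this total_recursive_list_Cons[OF assms(2) total_recursive_list_id]]
  show ?thesis by simp
qed

lemma total_recursive_If_eq:
  assumes "total_recursive k f1" "total_recursive k f2" "total_recursive k g" "total_recursive k h"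
  shows "total_recursive k (\<lambda>xs. if f1 xs = f2 xs then g xs else h xs)"
proof -
  let ?d = "\<lambda>xs. (f1 xs - f2 xs) + (f2 xs - f1 xs)"
  have "total_recursive k (\<lambda>xs. g xs * (1 - ?d xs) + h xs * (1 - (1 - ?d xs)))"
    by (intro total_recursive_add total_recursive_mult total_recursive_diff total_recursive_const assms)
  then show ?thesis by (rule total_recursive_cong) auto
qed

lemma total_recursive_prod_encode:
  assumes "total_recursive k f" "total_recursive k g"
  shows "total_recursive k (\<lambda>xs. prod_encode (f xs, g xs))"
proof -
  have triangle_eq_sum: "triangle n = (\<Sum>i<n. i) + n" for n
    by (induction n) auto
  have "total_recursive k (\<lambda>xs. (\<Sum>i<f xs + g xs. (i # xs) ! 0) + (f xs + g xs) + f xs)"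
    by (intro total_recursive_add total_recursive_sum total_recursive_nth assms) simp
  then show ?thesis by (rule total_recursive_cong) (simp add: prod_encode_def triangle_eq_sum)
qed


lemma sum_prod_encode_eq:
  "(\<Sum>a<Suc n. \<Sum>b<Suc n. if prod_encode (a, b) = n then h a b else 0) =
   (h (fst (prod_decode n)) (snd (prod_decode n)) :: nat)"
proof -
  obtain a0 b0 where n: "prod_decode n = (a0, b0)" by fastforce
  then have n_eq: "n = prod_encode (a0, b0)" by (metis prod_decode_inverse)
  have "a0 < Suc n" "b0 < Suc n"
    using le_prod_encode_1[of a0 b0] le_prod_encode_2[of b0 a0] n_eq by auto
  moreover have "prod_encode (a, b) = n \<longleftrightarrow> a = a0 \<and> b = b0" for a b
    using n_eq inj_prod_encode by (auto simp: inj_on_def)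
  moreover have "(\<Sum>b<Suc n. if a = a0 \<and> b = b0 then h a b else 0) = (if a = a0 then h a b0 else 0)"
    if "b0 < Suc n" for a
    using that by (cases "a = a0") simp_all
  ultimately show ?thesis by (simp add: n del: sum.lessThan_Suc)
qed

lemma total_recursive_prod_decode:
  assumes "total_recursive 2 h"
  shows "total_recursive 1 (\<lambda>xs. h [fst (prod_decode (xs ! 0)), snd (prod_decode (xs ! 0))])"
proof -
  let ?body = "\<lambda>ys. if prod_encode (ys ! 1, ys ! 0) = ys ! 2 then h [ys ! 1, ys ! 0] else 0"
  have "total_recursive (Suc (Suc (Suc 0))) ?body"
    by (intro total_recursive_If_eq total_recursive_prod_encode total_recursive_nth total_recursive_const
        total_recursive_compose2[OF assms]) auto
  then have "total_recursive (Suc (Suc 0)) (\<lambda>zs. \<Sum>b<Suc (zs ! 1). ?body (b # zs))"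
    by (rule total_recursive_sum) (intro total_recursive_Suc total_recursive_nth, simp)
  then have "total_recursive (Suc 0) (\<lambda>xs. \<Sum>a<Suc (xs ! 0). \<Sum>b<Suc ((a # xs) ! 1). ?body (b # a # xs))"
    by (rule total_recursive_sum) (intro total_recursive_Suc total_recursive_nth, simp)
  then have "total_recursive (Suc 0) (\<lambda>xs. h [fst (prod_decode (xs ! 0)), snd (prod_decode (xs ! 0))])"
    by (rule total_recursive_cong)
      (auto simp: length_Suc_conv sum_prod_encode_eq[where h="\<lambda>a b. h [a, b]", symmetric]
        cong: if_cong simp del: sum.lessThan_Suc)
  then show ?thesis by simp
qed

lemma total_recursive_fst_prod_decode:
  "total_recursive k f \<Longrightarrow> total_recursive k (\<lambda>xs. fst (prod_decode (f xs)))"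
  using total_recursive_compose1[OF total_recursive_prod_decode[OF total_recursive_nth[of 0 2]]]
  by simp

lemma total_recursive_snd_prod_decode:
  "total_recursive k f \<Longrightarrow> total_recursive k (\<lambda>xs. snd (prod_decode (f xs)))"
  using total_recursive_compose1[OF total_recursive_prod_decode[OF total_recursive_nth[of 1 2]]]
  by simp

definition seq_nth :: "nat \<Rightarrow> nat \<Rightarrow> nat" where
  "seq_nth i m = fst (prod_decode (((\<lambda>n. snd (prod_decode n)) ^^ i) m))"

lemma seq_nth_0: "seq_nth 0 (prod_encode (a, m)) = a"
  unfolding seq_nth_def by simp

lemma seq_nth_Suc: "seq_nth (Suc i) (prod_encode (a, m)) = seq_nth i m"
  unfolding seq_nth_def by (simp only: funpow_Suc_right comp_def prod_encode_inverse snd_conv)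

lemma ex_seq_nth_eq: "\<exists>m. \<forall>i<n. seq_nth i m = s i"
proof (induction n arbitrary: s)
  case (Suc n)
  obtain m where "\<forall>i<n. seq_nth i m = s (Suc i)" using Suc.IH[of "\<lambda>i. s (Suc i)"] by blast
  then have "\<forall>i<Suc n. seq_nth i (prod_encode (s 0, m)) = s i"
    by (auto simp: less_Suc_eq_0_disj seq_nth_0 seq_nth_Suc)
  then show ?case by blast
qed simp

lemma total_recursive_seq_nth:
  assumes "total_recursive k f" "total_recursive k g"
  shows "total_recursive k (\<lambda>xs. seq_nth (f xs) (g xs))"
proof -
  have "total_recursive (Suc (Suc 0)) (prim_rec (\<lambda>ys. ys ! 0) (\<lambda>ys. snd (prod_decode (ys ! 0))))"
    by (intro total_recursive_prim_rec total_recursive_nth total_recursive_snd_prod_decode) auto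
  then have "total_recursive (Suc (Suc 0)) (\<lambda>xs. ((\<lambda>n. snd (prod_decode n)) ^^ (xs ! 0)) (xs ! 1))"
  proof (rule total_recursive_cong)
    fix xs :: "nat list" assume "length xs = Suc (Suc 0)"
    then obtain a b where "xs = [a, b]" by (auto simp: length_Suc_conv)
    moreover have "prim_rec (\<lambda>ys. ys ! 0) (\<lambda>ys. snd (prod_decode (ys ! 0))) [a, b] =
        ((\<lambda>n. snd (prod_decode n)) ^^ a) b"
      by (induction a) (simp_all add: prim_rec_def)
    ultimately show "prim_rec (\<lambda>ys. ys ! 0) (\<lambda>ys. snd (prod_decode (ys ! 0))) xs =
        ((\<lambda>n. snd (prod_decode n)) ^^ (xs ! 0)) (xs ! 1)" by simp
  qed
  then have "total_recursive 2 (\<lambda>xs. ((\<lambda>n. snd (prod_decode n)) ^^ (xs ! 0)) (xs ! 1))"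
    by (simp add: numeral_2_eq_2)
  from total_recursive_fst_prod_decode[OF total_recursive_compose2[OF this assms]]
  show ?thesis by (simp add: seq_nth_def)
qed


section \<open>Decidable and \<open>\<Sigma>\<^sub>1\<close> relations\<close>

definition decidable_rel :: "nat \<Rightarrow> (nat list \<Rightarrow> bool) \<Rightarrow> bool" where
  "decidable_rel k R \<longleftrightarrow> total_recursive k (\<lambda>xs. if R xs then 0 else 1)"

lemma decidable_relI:
  assumes "total_recursive k \<chi>" "\<And>xs. length xs = k \<Longrightarrow> R xs \<longleftrightarrow> \<chi> xs = 0"
  shows "decidable_rel k R"
proof -
  have "total_recursive k (\<lambda>xs. if \<chi> xs = 0 then 0 else 1)"
    by (intro total_recursive_If_eq assms(1) total_recursive_const)
  then show ?thesis
    unfolding decidable_rel_def by (rule total_recursive_cong) (simp add: assms(2))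
qed

lemma decidable_rel_const: "decidable_rel k (\<lambda>_. P)"
  by (rule decidable_relI[OF total_recursive_const[of k "if P then 0 else 1"]]) simp

lemma decidable_rel_eq:
  assumes "total_recursive k f" "total_recursive k g"
  shows "decidable_rel k (\<lambda>xs. f xs = g xs)"
  by (rule decidable_relI[OF total_recursive_add[OF total_recursive_diff[OF assms]
        total_recursive_diff[OF assms(2,1)]]]) auto

lemma decidable_rel_Not:
  assumes "decidable_rel k R"
  shows "decidable_rel k (\<lambda>xs. \<not> R xs)"
  using assms unfolding decidable_rel_def[of k R]
  by (rule decidable_relI[OF total_recursive_diff[OF total_recursive_const[of k 1]]]) auto

lemma decidable_rel_conj:
  assumes "decidable_rel k R1" "decidable_rel k R2"
  shows "decidable_rel k (\<lambda>xs. R1 xs \<and> R2 xs)"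
  by (rule decidable_relI[OF total_recursive_add[OF assms[unfolded decidable_rel_def]]]) auto

lemma decidable_rel_disj:
  assumes "decidable_rel k R1" "decidable_rel k R2"
  shows "decidable_rel k (\<lambda>xs. R1 xs \<or> R2 xs)"
  by (rule decidable_relI[OF total_recursive_mult[OF assms[unfolded decidable_rel_def]]]) auto

lemma decidable_rel_ball:
  assumes "decidable_rel (Suc k) R" "total_recursive k b"
  shows "decidable_rel k (\<lambda>xs. \<forall>i<b xs. R (i # xs))"
  by (rule decidable_relI[OF total_recursive_sum[OF assms(1)[unfolded decidable_rel_def] assms(2)]])
    (auto split: if_splits)

lemma decidable_rel_compose:
  "decidable_rel m R \<Longrightarrow> total_recursive_list k m G \<Longrightarrow> decidable_rel k (\<lambda>xs. R (G xs))"
  unfolding decidable_rel_def by (rule total_recursive_compose)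

lemma decidable_rel_replace_hd:
  assumes "decidable_rel (Suc k) D" "total_recursive (Suc m) w" "total_recursive_list (Suc m) k G"
  shows "decidable_rel (Suc m) (\<lambda>ys. D (w ys # G ys))"
  using decidable_rel_compose[OF assms(1) total_recursive_list_Cons[OF assms(2,3)]] .

definition sigma1_rel :: "nat \<Rightarrow> (nat list \<Rightarrow> bool) \<Rightarrow> bool" where
  "sigma1_rel k R \<longleftrightarrow>
     (\<exists>D. decidable_rel (Suc k) D \<and> (\<forall>xs. length xs = k \<longrightarrow> (R xs \<longleftrightarrow> (\<exists>m. D (m # xs)))))"

lemma sigma1_rel_cong: "sigma1_rel k R \<Longrightarrow> (\<And>xs. length xs = k \<Longrightarrow> R xs = R' xs) \<Longrightarrow> sigma1_rel k R'"
  unfolding sigma1_rel_def by metis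

lemma total_recursive_list_tl: "total_recursive_list (Suc k) k (\<lambda>ys. drop 1 ys)"
  using total_recursive_list_drop[of 1 k] by simp

lemma sigma1_rel_decidable: "decidable_rel k R \<Longrightarrow> sigma1_rel k R"
  unfolding sigma1_rel_def
  by (rule exI[of _ "\<lambda>ys. R (drop 1 ys)"])
    (use decidable_rel_compose[OF _ total_recursive_list_tl] in simp)

lemma sigma1_rel_compose:
  assumes "sigma1_rel m R" "total_recursive_list k m G"
  shows "sigma1_rel k (\<lambda>xs. R (G xs))"
proof -
  obtain D where D: "decidable_rel (Suc m) D" "\<forall>xs. length xs = m \<longrightarrow> (R xs \<longleftrightarrow> (\<exists>w. D (w # xs)))"
    using assms(1) unfolding sigma1_rel_def by blast
  have "decidable_rel (Suc k) (\<lambda>ys. D (ys ! 0 # G (drop 1 ys)))"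
    by (intro decidable_rel_replace_hd[OF D(1)] total_recursive_nth
        total_recursive_list_compose[OF assms(2) total_recursive_list_tl]) simp
  moreover have "length (G xs) = m" if "length xs = k" for xs
    using assms(2) that unfolding total_recursive_list_def by blast
  ultimately show ?thesis
    unfolding sigma1_rel_def using D(2) by (intro exI[of _ "\<lambda>ys. D (ys ! 0 # G (drop 1 ys))"]) auto
qed

lemma sigma1_rel_ex:
  assumes "sigma1_rel (Suc k) R"
  shows "sigma1_rel k (\<lambda>xs. \<exists>n. R (n # xs))"
proof -
  obtain D where D: "decidable_rel (Suc (Suc k)) D"
    "\<forall>xs. length xs = Suc k \<longrightarrow> (R xs \<longleftrightarrow> (\<exists>m. D (m # xs)))"
    using assms unfolding sigma1_rel_def by blast
  let ?D = "\<lambda>ys. D (fst (prod_decode (ys ! 0)) # snd (prod_decode (ys ! 0)) # drop 1 ys)"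
  \<comment> \<open>the witness of the new relation codes both the old witness and the quantified variable\<close>
  have "decidable_rel (Suc k) ?D"
    by (intro decidable_rel_replace_hd[OF D(1)] total_recursive_list_Cons total_recursive_list_tl
        total_recursive_fst_prod_decode total_recursive_snd_prod_decode total_recursive_nth) simp_all
  moreover have "(\<exists>n. R (n # xs)) \<longleftrightarrow> (\<exists>m. ?D (m # xs))" if "length xs = k" for xs
  proof
    assume "\<exists>n. R (n # xs)"
    then obtain n where "R (n # xs)" by blast
    moreover have "length (n # xs) = Suc k" using that by simp
    ultimately obtain m where "D (m # n # xs)" using D(2) by blast
    then have "?D (prod_encode (m, n) # xs)" by simp
    then show "\<exists>m. ?D (m # xs)" by blast
  qed (use D(2) that in auto)
  ultimately show ?thesis unfolding sigma1_rel_def by blast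
qed

lemma sigma1_rel_conj:
  assumes "sigma1_rel k R1" "sigma1_rel k R2"
  shows "sigma1_rel k (\<lambda>xs. R1 xs \<and> R2 xs)"
proof -
  obtain D1 where D1: "decidable_rel (Suc k) D1" "\<forall>xs. length xs = k \<longrightarrow> (R1 xs \<longleftrightarrow> (\<exists>m. D1 (m # xs)))"
    using assms(1) unfolding sigma1_rel_def by blast
  obtain D2 where D2: "decidable_rel (Suc k) D2" "\<forall>xs. length xs = k \<longrightarrow> (R2 xs \<longleftrightarrow> (\<exists>m. D2 (m # xs)))"
    using assms(2) unfolding sigma1_rel_def by blast
  let ?D = "\<lambda>ys. D1 (fst (prod_decode (ys ! 0)) # drop 1 ys) \<and> D2 (snd (prod_decode (ys ! 0)) # drop 1 ys)"
  have "decidable_rel (Suc k) ?D"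
    by (intro decidable_rel_conj decidable_rel_replace_hd[OF D1(1)] decidable_rel_replace_hd[OF D2(1)]
        total_recursive_list_tl total_recursive_fst_prod_decode total_recursive_snd_prod_decode
        total_recursive_nth) simp_all
  moreover have "R1 xs \<and> R2 xs \<longleftrightarrow> (\<exists>m. ?D (m # xs))" if "length xs = k" for xs
  proof
    assume "R1 xs \<and> R2 xs"
    then have "\<exists>m. D1 (m # xs)" "\<exists>m. D2 (m # xs)" using D1(2) D2(2) that by auto
    then obtain m1 m2 where "D1 (m1 # xs)" "D2 (m2 # xs)" by blast
    then have "?D (prod_encode (m1, m2) # xs)" by simp
    then show "\<exists>m. ?D (m # xs)" by blast
  qed (use D1 D2 that in auto)
  ultimately show ?thesis unfolding sigma1_rel_def by blast
qed

lemma sigma1_rel_disj: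
  assumes "sigma1_rel k R1" "sigma1_rel k R2"
  shows "sigma1_rel k (\<lambda>xs. R1 xs \<or> R2 xs)"
proof -
  obtain D1 where D1: "decidable_rel (Suc k) D1" "\<forall>xs. length xs = k \<longrightarrow> (R1 xs \<longleftrightarrow> (\<exists>m. D1 (m # xs)))"
    using assms(1) unfolding sigma1_rel_def by blast
  obtain D2 where D2: "decidable_rel (Suc k) D2" "\<forall>xs. length xs = k \<longrightarrow> (R2 xs \<longleftrightarrow> (\<exists>m. D2 (m # xs)))"
    using assms(2) unfolding sigma1_rel_def by blast
  let ?D = "\<lambda>ys. D1 (ys ! 0 # drop 1 ys) \<or> D2 (ys ! 0 # drop 1 ys)"
  have "decidable_rel (Suc k) ?D"
    by (intro decidable_rel_disj decidable_rel_replace_hd[OF D1(1)] decidable_rel_replace_hd[OF D2(1)]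
        total_recursive_list_tl total_recursive_nth) simp_all
  moreover have "R1 xs \<or> R2 xs \<longleftrightarrow> (\<exists>m. ?D (m # xs))" if "length xs = k" for xs
    using D1 D2 that by auto
  ultimately show ?thesis unfolding sigma1_rel_def by blast
qed

lemma sigma1_rel_ball:
  assumes "sigma1_rel (Suc k) R" "total_recursive k b"
  shows "sigma1_rel k (\<lambda>xs. \<forall>i<b xs. R (i # xs))"
proof -
  obtain D where D: "decidable_rel (Suc (Suc k)) D"
    "\<forall>xs. length xs = Suc k \<longrightarrow> (R xs \<longleftrightarrow> (\<exists>m. D (m # xs)))"
    using assms unfolding sigma1_rel_def by blast
  \<comment> \<open>the witness of the new relation codes the finite sequence of witnesses for all \<open>i < b xs\<close>\<close>
  let ?D = "\<lambda>ys. \<forall>i<b (drop 1 ys). D (seq_nth i (ys ! 0) # i # drop 1 ys)"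
  have "decidable_rel (Suc (Suc k)) (\<lambda>zs. D (seq_nth (zs ! 0) (zs ! 1) # zs ! 0 # drop 2 zs))"
    by (intro decidable_rel_replace_hd[OF D(1)] total_recursive_list_Cons total_recursive_seq_nth
        total_recursive_nth) (use total_recursive_list_drop[of 2 k] in simp_all)
  from decidable_rel_ball[OF this total_recursive_compose[OF assms(2) total_recursive_list_tl]]
  have "decidable_rel (Suc k) ?D" by simp
  moreover have "(\<forall>i<b xs. R (i # xs)) \<longleftrightarrow> (\<exists>m. ?D (m # xs))" if "length xs = k" for xs
  proof
    assume "\<forall>i<b xs. R (i # xs)"
    then have "\<forall>i<b xs. \<exists>w. D (w # i # xs)" using D that by auto
    then obtain s where s: "\<forall>i<b xs. D (s i # i # xs)" by metis
    obtain m where "\<forall>i<b xs. seq_nth i m = s i" using ex_seq_nth_eq by blast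
    then have "?D (m # xs)" using s by simp
    then show "\<exists>m. ?D (m # xs)" by blast
  qed (use D that in auto)
  ultimately show ?thesis unfolding sigma1_rel_def by blast
qed

lemma sigma1_rel_all_less:
  "(\<And>i. i < (n::nat) \<Longrightarrow> sigma1_rel k (R i)) \<Longrightarrow> sigma1_rel k (\<lambda>xs. \<forall>i<n. R i xs)"
proof (induction n)
  case 0
  show ?case using sigma1_rel_decidable[OF decidable_rel_const[of k True]] by simp
next
  case (Suc n)
  have "sigma1_rel k (\<lambda>xs. (\<forall>i<n. R i xs) \<and> R n xs)" using Suc by (intro sigma1_rel_conj) auto
  then show ?case by (rule sigma1_rel_cong) (auto simp: less_Suc_eq)
qed

lemma sigma1_rel_ex_prefix:
  "sigma1_rel (n + k) R \<Longrightarrow> sigma1_rel k (\<lambda>xs. \<exists>us. length us = n \<and> R (us @ xs))"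
proof (induction n arbitrary: R)
  case 0
  then have "sigma1_rel k R" by simp
  then show ?case by (rule sigma1_rel_cong) simp
next
  case (Suc n)
  have "sigma1_rel (n + k) (\<lambda>ws. \<exists>y. R (y # ws))" using sigma1_rel_ex Suc.prems by simp
  from Suc.IH[OF this] show ?case
    by (rule sigma1_rel_cong) (metis append_Cons length_Suc_conv)
qed


section \<open>The graph of a recursive function term is \<open>\<Sigma>\<^sub>1\<close>\<close>

lemma eval_Prim_iff_seq_nth: "eval (Prim f g) (n # xs) z \<longleftrightarrow>
   (\<exists>m. eval f xs (seq_nth 0 m) \<and> (\<forall>i<n. eval g (seq_nth i m # i # xs) (seq_nth (Suc i) m)) \<and>
     seq_nth n m = z)"
proof
  assume "eval (Prim f g) (n # xs) z"
  then obtain s where s: "eval f xs (s 0)" "\<forall>i<n. eval g (s i # i # xs) (s (Suc i))" "s n = z"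
    unfolding eval_Prim_iff by blast
  moreover obtain m where "\<forall>i<Suc (Suc n). seq_nth i m = s i" using ex_seq_nth_eq by blast
  ultimately show "\<exists>m. eval f xs (seq_nth 0 m) \<and>
      (\<forall>i<n. eval g (seq_nth i m # i # xs) (seq_nth (Suc i) m)) \<and> seq_nth n m = z"
    by (intro exI[of _ m]) auto
qed (auto simp: eval_Prim_iff)

lemma sigma1_rel_eval_Comp:
  assumes f: "\<And>k. sigma1_rel (Suc k) (\<lambda>ys. eval f (tl ys) (hd ys))"
    and gs: "\<And>g k. g \<in> set gs \<Longrightarrow> sigma1_rel (Suc k) (\<lambda>ys. eval g (tl ys) (hd ys))"
  shows "sigma1_rel (Suc k) (\<lambda>ys. eval (Comp f gs) (tl ys) (hd ys))"
proof -
  let ?n = "length gs"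
  \<comment> \<open>the values of the inner terms are guessed as a prefix of length \<open>?n\<close>\<close>
  have "sigma1_rel (?n + Suc k) (\<lambda>ws. \<forall>i<?n. eval (gs ! i) (drop (Suc ?n) ws) (ws ! i))"
  proof (rule sigma1_rel_all_less)
    fix i assume i: "i < ?n"
    have "total_recursive_list (?n + Suc k) (Suc k) (\<lambda>ws. ws ! i # drop (Suc ?n) ws)"
      using total_recursive_list_Cons[OF total_recursive_nth[of i "Suc ?n + k"]
          total_recursive_list_drop[of "Suc ?n" k]] i by simp
    from sigma1_rel_compose[OF gs[OF nth_mem[OF i]] this]
    show "sigma1_rel (?n + Suc k) (\<lambda>ws. eval (gs ! i) (drop (Suc ?n) ws) (ws ! i))" by simp
  qed
  moreover have "sigma1_rel (?n + Suc k) (\<lambda>ws. eval f (take ?n ws) (ws ! ?n))"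
    using sigma1_rel_compose[OF f total_recursive_list_Cons[OF total_recursive_nth[of ?n "?n + Suc k"]
          total_recursive_list_take[of ?n "?n + Suc k"]]] by simp
  ultimately have "sigma1_rel (Suc k) (\<lambda>zs. \<exists>us. length us = ?n \<and>
      (\<forall>i<?n. eval (gs ! i) (drop (Suc ?n) (us @ zs)) ((us @ zs) ! i)) \<and>
      eval f (take ?n (us @ zs)) ((us @ zs) ! ?n))"
    by (intro sigma1_rel_ex_prefix sigma1_rel_conj)
  then show ?thesis
  proof (rule sigma1_rel_cong)
    fix ys :: "nat list" assume "length ys = Suc k"
    then obtain z xs where "ys = z # xs" by (auto simp: length_Suc_conv)
    have "(\<forall>i<?n. eval (gs ! i) (drop (Suc ?n) (us @ z # xs)) ((us @ z # xs) ! i)) \<and>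
        eval f (take ?n (us @ z # xs)) ((us @ z # xs) ! ?n) \<longleftrightarrow>
        (\<forall>i<?n. eval (gs ! i) xs (us ! i)) \<and> eval f us z" if "length us = ?n" for us
      using that by (simp add: nth_append)
    then show "(\<exists>us. length us = ?n \<and>
        (\<forall>i<?n. eval (gs ! i) (drop (Suc ?n) (us @ ys)) ((us @ ys) ! i)) \<and>
        eval f (take ?n (us @ ys)) ((us @ ys) ! ?n)) \<longleftrightarrow> eval (Comp f gs) (tl ys) (hd ys)"
      unfolding eval_Comp_iff \<open>ys = z # xs\<close> list.sel by (intro ex_cong1) blast
  qed
qed

lemma sigma1_rel_eval_Prim:
  assumes f: "\<And>k. sigma1_rel (Suc k) (\<lambda>ys. eval f (tl ys) (hd ys))"
    and g: "\<And>k. sigma1_rel (Suc k) (\<lambda>ys. eval g (tl ys) (hd ys))"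
  shows "sigma1_rel (Suc k) (\<lambda>ys. eval (Prim f g) (tl ys) (hd ys))"
proof (cases k)
  case 0
  show ?thesis
    by (rule sigma1_rel_cong[OF sigma1_rel_decidable[OF decidable_rel_const[of _ False]]])
      (auto simp: 0 length_Suc_conv not_eval_Prim_Nil)
next
  case (Suc k')
  \<comment> \<open>variables \<open>m # z # n # xs\<close>, where \<open>m\<close> codes the sequence of intermediate values\<close>
  have A: "sigma1_rel (Suc (Suc (Suc k'))) (\<lambda>ws. eval f (drop 3 ws) (seq_nth 0 (ws ! 0)))"
    using sigma1_rel_compose[OF f total_recursive_list_Cons[OF total_recursive_seq_nth[OF
          total_recursive_const total_recursive_nth[of 0 "3 + k'"]] total_recursive_list_drop[of 3 k']]]
    by (simp add: numeral_3_eq_3)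
  have B: "sigma1_rel (Suc (Suc (Suc k')))
      (\<lambda>ws. \<forall>i<ws ! 2. eval g (seq_nth i (ws ! 0) # i # drop 3 ws) (seq_nth (Suc i) (ws ! 0)))"
  proof -
    have "total_recursive_list (Suc (3 + k')) (Suc (Suc (Suc k')))
        (\<lambda>vs. seq_nth (Suc (vs ! 0)) (vs ! 1) # seq_nth (vs ! 0) (vs ! 1) # vs ! 0 # drop 4 vs)"
      by (intro total_recursive_list_Cons total_recursive_seq_nth total_recursive_Suc total_recursive_nth)
        (use total_recursive_list_drop[of 4 k'] in simp_all)
    from sigma1_rel_ball[OF sigma1_rel_compose[OF g this] total_recursive_nth[of 2 "3 + k'"]]
    show ?thesis by (simp add: numeral_3_eq_3)
  qed
  have C: "sigma1_rel (Suc (Suc (Suc k'))) (\<lambda>ws. seq_nth (ws ! 2) (ws ! 0) = ws ! 1)"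
    by (intro sigma1_rel_decidable decidable_rel_eq total_recursive_seq_nth total_recursive_nth) simp_all
  from sigma1_rel_ex[OF sigma1_rel_conj[OF A sigma1_rel_conj[OF B C]]] show ?thesis unfolding Suc
    by (rule sigma1_rel_cong) (auto simp: length_Suc_conv eval_Prim_iff_seq_nth)
qed

lemma sigma1_rel_eval_Mn:
  assumes f: "\<And>k. sigma1_rel (Suc k) (\<lambda>ys. eval f (tl ys) (hd ys))"
  shows "sigma1_rel (Suc k) (\<lambda>ys. eval (Mn f) (tl ys) (hd ys))"
proof -
  have "sigma1_rel (Suc k) (\<lambda>ys. eval f ys 0)"
    using sigma1_rel_compose[OF f total_recursive_list_Cons[OF total_recursive_const total_recursive_list_id]]
    by simp
  moreover have "sigma1_rel (Suc k) (\<lambda>ys. \<forall>m<ys ! 0. \<exists>j. j \<noteq> 0 \<and> eval f (m # drop 1 ys) j)"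
  proof -
    have "total_recursive_list (3 + k) (Suc (Suc k)) (\<lambda>vs. vs ! 0 # vs ! 1 # drop 3 vs)"
      by (intro total_recursive_list_Cons total_recursive_nth)
        (use total_recursive_list_drop[of 3 k] in simp_all)
    from sigma1_rel_compose[OF f this]
    have "sigma1_rel (Suc (Suc (Suc k))) (\<lambda>vs. eval f (vs ! 1 # drop 3 vs) (vs ! 0))"
      by (simp add: numeral_3_eq_3)
    moreover have "sigma1_rel (Suc (Suc (Suc k))) (\<lambda>vs. vs ! 0 \<noteq> 0)"
      by (intro sigma1_rel_decidable decidable_rel_Not decidable_rel_eq total_recursive_nth
          total_recursive_const) simp
    ultimately have "sigma1_rel (Suc (Suc (Suc k))) (\<lambda>vs. vs ! 0 \<noteq> 0 \<and> eval f (vs ! 1 # drop 3 vs) (vs ! 0))"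
      using sigma1_rel_conj by blast
    from sigma1_rel_ball[OF sigma1_rel_ex[OF this] total_recursive_nth[of 0 "Suc k"]]
    show ?thesis by simp
  qed
  ultimately have "sigma1_rel (Suc k) (\<lambda>ys. eval f ys 0 \<and> (\<forall>m<ys ! 0. \<exists>j. j \<noteq> 0 \<and> eval f (m # drop 1 ys) j))"
    by (rule sigma1_rel_conj)
  then show ?thesis
    by (rule sigma1_rel_cong) (auto simp: length_Suc_conv eval_Mn_iff)
qed

lemma sigma1_rel_eval: "sigma1_rel (Suc k) (\<lambda>ys. eval r (tl ys) (hd ys))"
proof (induction r arbitrary: k)
  case Zero
  have "sigma1_rel (Suc k) (\<lambda>ys. ys ! 0 = 0)"
    by (intro sigma1_rel_decidable decidable_rel_eq total_recursive_nth total_recursive_const) simp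
  then show ?case by (rule sigma1_rel_cong) (auto simp: length_Suc_conv eval_Zero_iff)
next
  case Succ
  have "sigma1_rel (Suc k) (\<lambda>ys. 0 < k \<and> ys ! 0 = Suc (ys ! 1))"
  proof (cases k)
    case 0
    then show ?thesis using sigma1_rel_decidable[OF decidable_rel_const[of _ False]] by simp
  next
    case (Suc k')
    then show ?thesis
      by (simp, intro sigma1_rel_decidable decidable_rel_eq total_recursive_nth total_recursive_Suc) simp_all
  qed
  then show ?case by (rule sigma1_rel_cong) (auto simp: length_Suc_conv eval_Succ_iff hd_conv_nth)
next
  case (Proj i)
  have "sigma1_rel (Suc k) (\<lambda>ys. i < k \<and> ys ! 0 = ys ! Suc i)"
  proof (cases "i < k")
    case True
    then show ?thesis
      by (simp, intro sigma1_rel_decidable decidable_rel_eq total_recursive_nth) simp_all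
  qed (use sigma1_rel_decidable[OF decidable_rel_const[of _ False]] in simp)
  then show ?case by (rule sigma1_rel_cong) (auto simp: length_Suc_conv eval_Proj_iff)
next
  case (Comp f gs)
  then show ?case by (intro sigma1_rel_eval_Comp)
next
  case (Prim f g)
  then show ?case by (intro sigma1_rel_eval_Prim)
next
  case (Mn f)
  then show ?case by (intro sigma1_rel_eval_Mn)
qed


section \<open>Arithmetical hierarchy\<close>

lemma computable_set_iff_decidable_rel: "computable_set L \<longleftrightarrow> decidable_rel 1 (\<lambda>xs. xs ! 0 \<notin> L)"
  unfolding computable_set_def partrec_def decidable_rel_def total_recursive_def
proof
  assume "\<exists>r. \<forall>x y. eval r [x] y \<longleftrightarrow> Some (if x \<in> L then 1 else 0) = Some y"
  then obtain r where r: "\<forall>x y. eval r [x] y \<longleftrightarrow> Some (if x \<in> L then 1 else 0) = Some y" by blast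
  have "eval r xs (if xs ! 0 \<notin> L then 0 else 1)" if "length xs = 1" for xs
    using that r by (auto simp: length_Suc_conv)
  then show "\<exists>r. \<forall>xs. length xs = 1 \<longrightarrow> eval r xs (if xs ! 0 \<notin> L then 0 else 1)" by blast
next
  assume "\<exists>r. \<forall>xs. length xs = 1 \<longrightarrow> eval r xs (if xs ! 0 \<notin> L then 0 else 1)"
  then obtain r where r: "\<forall>xs. length xs = 1 \<longrightarrow> eval r xs (if xs ! 0 \<notin> L then 0 else 1)" by blast
  have "eval r [x] y \<longleftrightarrow> Some (if x \<in> L then 1 else 0) = Some y" for x y
    using r[rule_format, of "[x]"] eval_deterministic by auto
  then show "\<exists>r. \<forall>x y. eval r [x] y \<longleftrightarrow> Some (if x \<in> L then 1 else 0) = Some y" by blast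
qed

lemma decidable_rel_of_computable_pairs:
  assumes "computable_set {c. P (fst (prod_decode c)) (snd (prod_decode c))}"
  shows "decidable_rel 2 (\<lambda>ys. P (ys ! 0) (ys ! 1))"
proof -
  have "decidable_rel 1 (\<lambda>xs. P (fst (prod_decode (xs ! 0))) (snd (prod_decode (xs ! 0))))"
    using decidable_rel_Not[OF assms[unfolded computable_set_iff_decidable_rel]] by simp
  from decidable_rel_compose[OF this[unfolded One_nat_def] total_recursive_list_Cons[OF
        total_recursive_prod_encode[OF total_recursive_nth[of 0 2] total_recursive_nth[of 1 2]]
        total_recursive_list_Nil]]
  show ?thesis by simp
qed

lemma total_recursive_list_prod_decode:
  "total_recursive_list 1 2 (\<lambda>xs. [fst (prod_decode (xs ! 0)), snd (prod_decode (xs ! 0))])"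
proof -
  have "total_recursive_list (Suc 0) (Suc (Suc 0))
      (\<lambda>xs. [fst (prod_decode (xs ! 0)), snd (prod_decode (xs ! 0))])"
    by (intro total_recursive_list_Cons total_recursive_list_Nil total_recursive_fst_prod_decode
        total_recursive_snd_prod_decode total_recursive_nth) simp_all
  then show ?thesis by (simp add: numeral_2_eq_2)
qed

lemma total_recursive_list_swap: "total_recursive_list 2 2 (\<lambda>xs. [xs ! 1, xs ! 0])"
proof -
  have "total_recursive_list (Suc (Suc 0)) (Suc (Suc 0)) (\<lambda>xs. [xs ! 1, xs ! 0])"
    by (intro total_recursive_list_Cons total_recursive_list_Nil total_recursive_nth) simp_all
  then show ?thesis by (simp add: numeral_2_eq_2)
qed

lemma sigma1_rel_prod_decode:
  "sigma1_rel 2 R \<Longrightarrow> sigma1_rel 1 (\<lambda>xs. R [fst (prod_decode (xs ! 0)), snd (prod_decode (xs ! 0))])"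
  using sigma1_rel_compose total_recursive_list_prod_decode by blast

lemma Sigma1_of_sigma1_rel:
  assumes "sigma1_rel 1 R"
  shows "Sigma 1 {c. R [c]}"
proof -
  obtain D where D: "decidable_rel 2 D" "\<forall>xs. length xs = 1 \<longrightarrow> (R xs \<longleftrightarrow> (\<exists>m. D (m # xs)))"
    using assms unfolding sigma1_rel_def by (auto simp: numeral_2_eq_2)
  let ?P = "{n. D [snd (prod_decode n), fst (prod_decode n)]}"
  have "decidable_rel 1 (\<lambda>xs. D [snd (prod_decode (xs ! 0)), fst (prod_decode (xs ! 0))])"
    using decidable_rel_compose[OF decidable_rel_compose[OF D(1) total_recursive_list_swap]
        total_recursive_list_prod_decode] by simp
  then have "computable_set (- ?P)" unfolding computable_set_iff_decidable_rel by simp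
  moreover have "{c. R [c]} = {c. \<exists>m. prod_encode (c, m) \<in> ?P}"
    using D(2) by auto
  ultimately show ?thesis unfolding One_nat_def
    by (intro Sigma.simps(2)[THEN iffD2] exI[of _ ?P]) simp
qed

lemma Sigma2_of_sigma1_rel:
  assumes "sigma1_rel 1 R"
  shows "Sigma 2 {c. \<exists>m. \<not> R [prod_encode (c, m)]}"
proof -
  have "Sigma 1 (- (- {n. R [n]}))" using Sigma1_of_sigma1_rel[OF assms] by simp
  moreover have "{c. \<exists>m. \<not> R [prod_encode (c, m)]} = {c. \<exists>m. prod_encode (c, m) \<in> - {n. R [n]}}"
    by auto
  ultimately show ?thesis unfolding numeral_2_eq_2 One_nat_def[symmetric]
    by (simp only: Sigma.simps(2)) blast
qed

lemma Sigma1_of_sigma1_rel_pairs: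
  "sigma1_rel 2 R \<Longrightarrow> Sigma 1 {n. R [fst (prod_decode n), snd (prod_decode n)]}"
  using Sigma1_of_sigma1_rel[OF sigma1_rel_prod_decode] by simp

lemma Sigma2_ex_Sigma1_and_not_Sigma1:
  assumes S: "sigma1_rel 2 S" and N: "sigma1_rel 2 N"
  shows "Sigma 2 {c. \<exists>m. S [c, m] \<and> \<not> N [c, m]}"
proof -
  obtain D where D: "decidable_rel 3 D" "\<forall>xs. length xs = 2 \<longrightarrow> (S xs \<longleftrightarrow> (\<exists>w. D (w # xs)))"
    using S unfolding sigma1_rel_def by (auto simp: numeral_3_eq_3 numeral_2_eq_2)
  \<comment> \<open>the argument \<open>\<langle>c, \<langle>w, m\<rangle>\<rangle>\<close> of \<open>R\<close> packs the point, the witness for \<open>S\<close> and the value\<close>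
  let ?c = "\<lambda>xs. fst (prod_decode (xs ! 0))"
  let ?w = "\<lambda>xs. fst (prod_decode (snd (prod_decode (xs ! 0))))"
  let ?m = "\<lambda>xs. snd (prod_decode (snd (prod_decode (xs ! 0))))"
  define R where "R xs \<longleftrightarrow> \<not> D [?w xs, ?c xs, ?m xs] \<or> N [?c xs, ?m xs]" for xs
  have "total_recursive_list (Suc 0) (Suc (Suc (Suc 0))) (\<lambda>xs. [?w xs, ?c xs, ?m xs])"
    by (intro total_recursive_list_Cons total_recursive_list_Nil total_recursive_fst_prod_decode
        total_recursive_snd_prod_decode total_recursive_nth) simp_all
  from decidable_rel_Not[OF decidable_rel_compose[OF D(1)[unfolded numeral_3_eq_3] this]]
  have D': "decidable_rel 1 (\<lambda>xs. \<not> D [?w xs, ?c xs, ?m xs])" by simp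
  have "total_recursive_list (Suc 0) (Suc (Suc 0)) (\<lambda>xs. [?c xs, ?m xs])"
    by (intro total_recursive_list_Cons total_recursive_list_Nil total_recursive_fst_prod_decode
        total_recursive_snd_prod_decode total_recursive_nth) simp_all
  from sigma1_rel_compose[OF N[unfolded numeral_2_eq_2] this]
  have "sigma1_rel 1 (\<lambda>xs. N [?c xs, ?m xs])" by simp
  with sigma1_rel_disj[OF sigma1_rel_decidable[OF D']] have "sigma1_rel 1 R"
    unfolding R_def by blast
  moreover have "(\<exists>m. S [c, m] \<and> \<not> N [c, m]) \<longleftrightarrow> (\<exists>q. \<not> R [prod_encode (c, q)])" for c
  proof
    assume "\<exists>m. S [c, m] \<and> \<not> N [c, m]"
    then obtain w m where "D [w, c, m]" "\<not> N [c, m]" using D(2) by (auto simp: numeral_2_eq_2)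
    then have "\<not> R [prod_encode (c, prod_encode (w, m))]" by (simp add: R_def)
    then show "\<exists>q. \<not> R [prod_encode (c, q)]" by blast
  next
    assume "\<exists>q. \<not> R [prod_encode (c, q)]"
    then obtain w m where "D [w, c, m]" "\<not> N [c, m]" by (auto simp: R_def)
    then show "\<exists>m. S [c, m] \<and> \<not> N [c, m]" using D(2) by (auto simp: numeral_2_eq_2)
  qed
  ultimately show ?thesis using Sigma2_of_sigma1_rel by simp
qed


section \<open>Maxima of monotone enumerations\<close>

lemma finite_chain_has_greatest:
  assumes "finite V" "V \<noteq> {}" "\<forall>a\<in>V. \<forall>b\<in>V. a = b \<or> lt a b \<or> lt b a"
    and trans: "\<forall>x y z. lt x y \<longrightarrow> lt y z \<longrightarrow> lt x z"
  shows "\<exists>v\<in>V. \<forall>w\<in>V. w = v \<or> lt w v"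
  using assms(1-3)
proof (induction V rule: finite_ne_induct)
  case (insert x F)
  then obtain v where v: "v \<in> F" "\<forall>w\<in>F. w = v \<or> lt w v" by auto
  have "x = v \<or> lt x v \<or> lt v x" using insert.prems v(1) by auto
  moreover have "\<forall>w\<in>insert x F. w = x \<or> lt w x" if "lt v x"
    using v(2) trans that by (metis insert_iff)
  ultimately show ?case using v by auto
qed simp

lemma values_at_chain:
  assumes mono: "\<forall>t t' a b. t \<le> t' \<longrightarrow> f x t = Some a \<longrightarrow> f x t' = Some b \<longrightarrow> a = b \<or> lt a b"
  shows "\<forall>a\<in>values_at f x. \<forall>b\<in>values_at f x. a = b \<or> lt a b \<or> lt b a"
proof (intro ballI)
  fix a b assume "a \<in> values_at f x" "b \<in> values_at f x"
  then obtain t t' where "f x t = Some a" "f x t' = Some b" unfolding values_at_def by auto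
  then show "a = b \<or> lt a b \<or> lt b a" using mono by (metis nat_le_linear)
qed

lemma finite_values_at_if_greatest:
  assumes irrefl: "\<forall>x. \<not> lt x x" and trans: "\<forall>x y z. lt x y \<longrightarrow> lt y z \<longrightarrow> lt x z"
    and mono: "\<forall>t t' a b. t \<le> t' \<longrightarrow> f x t = Some a \<longrightarrow> f x t' = Some b \<longrightarrow> a = b \<or> lt a b"
    and greatest: "d \<in> values_at f x" "\<forall>w\<in>values_at f x. w = d \<or> lt w d"
  shows "finite (values_at f x)"
proof -
  \<comment> \<open>by monotonicity, every value enumerated after \<open>d\<close> equals \<open>d\<close>\<close>
  obtain t0 where t0: "f x t0 = Some d" using greatest(1) unfolding values_at_def by auto
  have "values_at f x \<subseteq> insert d ((\<lambda>t. the (f x t)) ` {..<t0})"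
  proof
    fix v assume v: "v \<in> values_at f x"
    then obtain t where t: "f x t = Some v" unfolding values_at_def by auto
    show "v \<in> insert d ((\<lambda>t. the (f x t)) ` {..<t0})"
    proof (cases "t < t0")
      case False
      then have "d = v \<or> lt d v" using mono t0 t by (meson not_less)
      then show ?thesis using greatest(2) v irrefl trans by blast
    qed (use t in \<open>auto intro: image_eqI[where x=t]\<close>)
  qed
  then show ?thesis by (rule finite_subset) simp
qed

lemma maxD_eq_Some_iff:
  assumes irrefl: "\<forall>x. \<not> lt x x" and trans: "\<forall>x y z. lt x y \<longrightarrow> lt y z \<longrightarrow> lt x z"
    and mono: "\<forall>t t' a b. t \<le> t' \<longrightarrow> f x t = Some a \<longrightarrow> f x t' = Some b \<longrightarrow> a = b \<or> lt a b"
  shows "maxD lt f x = Some d \<longleftrightarrow> d \<in> values_at f x \<and> (\<forall>w\<in>values_at f x. w = d \<or> lt w d)"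
proof -
  let ?greatest = "\<lambda>v. v \<in> values_at f x \<and> (\<forall>w\<in>values_at f x. w = v \<or> lt w v)"
  have unique: "a = b" if "?greatest a" "?greatest b" for a b
    using that irrefl trans by metis
  show ?thesis
  proof
    assume "maxD lt f x = Some d"
    then have "finite (values_at f x)" "values_at f x \<noteq> {}" and d: "d = (THE v. ?greatest v)"
      unfolding maxD_def by (auto split: if_splits)
    then obtain v where v: "?greatest v"
      using finite_chain_has_greatest[OF _ _ values_at_chain[where f=f and x=x and lt=lt, OF mono] trans] by blast
    show "?greatest d" unfolding d by (rule theI[where P="?greatest", OF v]) (use unique v in blast)
  next
    assume d: "?greatest d"
    then have "(THE v. ?greatest v) = d" using unique by (intro the_equality) blast+
    then show "maxD lt f x = Some d"
      unfolding maxD_def using finite_values_at_if_greatest[where f=f and x=x and lt=lt, OF irrefl trans mono] d by auto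
  qed
qed

lemma minD_eq_maxD_converse: "minD lt f = maxD (\<lambda>a b. lt b a) f"
  unfolding minD_def maxD_def by simp

lemma MinPR_eq_MaxPR_converse: "MinPR ks lt \<rho> = MaxPR ks (\<lambda>a b. lt b a) \<rho>"
  unfolding MinPR_def MaxPR_def mono_decr_def mono_incr_def minD_eq_maxD_converse ..



lemma sigma1_rel_eval_unary: "sigma1_rel 2 (\<lambda>ys. eval r [ys ! 0] (ys ! 1))"
proof -
  have "sigma1_rel (Suc (Suc 0)) (\<lambda>ys. eval r (tl ys) (hd ys))" by (rule sigma1_rel_eval)
  then have "sigma1_rel (Suc (Suc 0)) (\<lambda>ys. eval r [ys ! 1] (ys ! 0))"
    by (rule sigma1_rel_cong) (auto simp: length_Suc_conv)
  then have "sigma1_rel 2 (\<lambda>ys. eval r [ys ! 1] (ys ! 0))"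
    by (simp add: numeral_2_eq_2)
  from sigma1_rel_compose[OF this total_recursive_list_swap] show ?thesis by simp
qed

lemma sigma1_rel_attained: "sigma1_rel 2 (\<lambda>ys. \<exists>t. eval r [prod_encode (ys ! 0, t)] (ys ! 1))"
proof -
  have "total_recursive_list (Suc (Suc (Suc 0))) 2 (\<lambda>vs. [prod_encode (vs ! 1, vs ! 0), vs ! 2])"
    using total_recursive_list_Cons[OF total_recursive_prod_encode[OF total_recursive_nth total_recursive_nth]
        total_recursive_list_Cons[OF total_recursive_nth total_recursive_list_Nil]]
    by (simp add: numeral_2_eq_2)
  from sigma1_rel_ex[OF sigma1_rel_compose[OF sigma1_rel_eval_unary this]]
  show ?thesis by (simp add: numeral_2_eq_2)
qed

lemma sigma1_rel_exceeded:
  assumes "decidable_rel 2 (\<lambda>ys. P (ys ! 0) (ys ! 1))"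
  shows "sigma1_rel 2 (\<lambda>ys. \<exists>t v. eval r [prod_encode (ys ! 0, t)] v \<and> v \<noteq> ys ! 1 \<and> \<not> P v (ys ! 1))"
proof -
  let ?k = "Suc (Suc (Suc (Suc 0)))"
  have "total_recursive_list ?k 2 (\<lambda>vs. [prod_encode (vs ! 2, vs ! 1), vs ! 0])"
    using total_recursive_list_Cons[OF total_recursive_prod_encode[OF total_recursive_nth total_recursive_nth]
        total_recursive_list_Cons[OF total_recursive_nth total_recursive_list_Nil]]
    by (simp add: numeral_2_eq_2)
  from sigma1_rel_compose[OF sigma1_rel_eval_unary this]
  have "sigma1_rel ?k (\<lambda>vs. eval r [prod_encode (vs ! 2, vs ! 1)] (vs ! 0))" by simp
  moreover have "total_recursive_list ?k 2 (\<lambda>vs. [vs ! 0, vs ! 3])"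
    using total_recursive_list_Cons[OF total_recursive_nth total_recursive_list_Cons[OF total_recursive_nth
          total_recursive_list_Nil]]
    by (simp add: numeral_2_eq_2 numeral_3_eq_3)
  from decidable_rel_conj[OF decidable_rel_Not[OF decidable_rel_eq[OF
          total_recursive_nth[of 0 ?k] total_recursive_nth[of 3 ?k]]]
        decidable_rel_Not[OF decidable_rel_compose[OF assms this]]]
  have "decidable_rel ?k (\<lambda>vs. vs ! 0 \<noteq> vs ! 3 \<and> \<not> P (vs ! 0) (vs ! 3))" by simp
  ultimately have "sigma1_rel ?k (\<lambda>vs. eval r [prod_encode (vs ! 2, vs ! 1)] (vs ! 0) \<and>
      vs ! 0 \<noteq> vs ! 3 \<and> \<not> P (vs ! 0) (vs ! 3))"
    using sigma1_rel_conj sigma1_rel_decidable by blast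
  from sigma1_rel_ex[OF sigma1_rel_ex[OF this]]
  have "sigma1_rel (Suc (Suc 0))
      (\<lambda>ys. \<exists>t v. eval r [prod_encode (ys ! 0, t)] v \<and> v \<noteq> ys ! 1 \<and> \<not> P v (ys ! 1))"
    by (rule sigma1_rel_cong) (auto simp: length_Suc_conv numeral_3_eq_3)
  then show ?thesis by (simp add: numeral_2_eq_2)
qed


lemma graph_and_domain_complexity:
  assumes bij: "bij \<rho>" and S: "sigma1_rel 2 S" and N: "sigma1_rel 2 N"
    and graph: "\<And>x m. x \<in> bspace ks \<Longrightarrow> g x = Some (\<rho> m) \<longleftrightarrow> S [code x, m] \<and> \<not> N [code x, m]"
  shows "rel_Sigma1_and_Pi1 ks \<rho> (graph_on ks g) \<and> set_Sigma 2 ks (dom_on ks g)"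
proof -
  have inv_\<rho>: "inv \<rho> (\<rho> m) = m" "\<rho> (inv \<rho> d) = d" for m d
    using bij by (simp_all add: bij_is_inj bij_is_surj surj_f_inv_f)
  let ?S = "{(x, d). S [code x, inv \<rho> d]}" and ?P = "{(x, d). \<not> N [code x, inv \<rho> d]}"
  have "rel_Sigma 1 ks \<rho> ?S"
    unfolding rel_Sigma_def using Sigma1_of_sigma1_rel_pairs[OF S]
    by (intro exI[of _ "{n. S [fst (prod_decode n), snd (prod_decode n)]}"]) (simp add: inv_\<rho>)
  moreover have "rel_Pi 1 ks \<rho> ?P"
    unfolding rel_Pi_def Pi_def using Sigma1_of_sigma1_rel_pairs[OF N]
    by (intro exI[of _ "- {n. N [fst (prod_decode n), snd (prod_decode n)]}"]) (simp add: inv_\<rho>)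
  moreover have "(x, d) \<in> graph_on ks g \<longleftrightarrow> (x, d) \<in> ?S \<and> (x, d) \<in> ?P" if "x \<in> bspace ks" for x d
    using graph[OF that, of "inv \<rho> d"] that by (simp add: graph_on_def inv_\<rho>)
  ultimately have "rel_Sigma1_and_Pi1 ks \<rho> (graph_on ks g)"
    unfolding rel_Sigma1_and_Pi1_def by blast
  moreover
  have "g x \<noteq> None \<longleftrightarrow> (\<exists>m. g x = Some (\<rho> m))" for x
  proof
    assume "g x \<noteq> None"
    then obtain d where "g x = Some (\<rho> (inv \<rho> d))" using inv_\<rho>(2) by fastforce
    then show "\<exists>m. g x = Some (\<rho> m)" by blast
  qed auto
  then have "x \<in> dom_on ks g \<longleftrightarrow> (\<exists>m. S [code x, m] \<and> \<not> N [code x, m])" if "x \<in> bspace ks" for x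
    using graph[OF that] that unfolding dom_on_def by simp
  then have "set_Sigma 2 ks (dom_on ks g)"
    unfolding set_Sigma_def using Sigma2_ex_Sigma1_and_not_Sigma1[OF S N] by blast
  ultimately show ?thesis ..
qed

lemma pcomp2_eval:
  assumes "pcomp2 ks \<rho> f" "bij \<rho>"
  obtains r where "\<And>x t m. x \<in> bspace ks \<Longrightarrow> f x t = Some (\<rho> m) \<longleftrightarrow> eval r [prod_encode (code x, t)] m"
proof -
  obtain \<phi> r where r: "\<forall>n y. eval r [n] y \<longleftrightarrow> \<phi> n = Some y"
    and \<phi>: "\<forall>x\<in>bspace ks. \<forall>t. \<phi> (prod_encode (code x, t)) = map_option (inv \<rho>) (f x t)"
    using assms(1) unfolding pcomp2_def partrec_def by blast
  have "inv \<rho> d = m \<longleftrightarrow> d = \<rho> m" for d m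
    using assms(2) by (metis bij_inv_eq_iff)
  then have "f x t = Some (\<rho> m) \<longleftrightarrow> eval r [prod_encode (code x, t)] m" if "x \<in> bspace ks" for x t m
    using r \<phi> that by (cases "f x t") auto
  then show ?thesis using that by blast
qed

lemma maxD_eq_Some_iff_eval:
  assumes bij: "bij \<rho>" and irrefl: "\<forall>x. \<not> lt x x" and trans: "\<forall>x y z. lt x y \<longrightarrow> lt y z \<longrightarrow> lt x z"
    and mono: "\<forall>t t' a b. t \<le> t' \<longrightarrow> f x t = Some a \<longrightarrow> f x t' = Some b \<longrightarrow> a = b \<or> lt a b"
    and f: "\<And>t m. f x t = Some (\<rho> m) \<longleftrightarrow> eval r [prod_encode (c, t)] m"
  shows "maxD lt f x = Some (\<rho> m) \<longleftrightarrow> (\<exists>t. eval r [prod_encode (c, t)] m) \<and>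
    \<not> (\<exists>t v. eval r [prod_encode (c, t)] v \<and> v \<noteq> m \<and> \<not> lt (\<rho> v) (\<rho> m))"
proof -
  have inv_\<rho>: "inv \<rho> (\<rho> m) = m" "\<rho> (inv \<rho> d) = d" for m d
    using bij by (simp_all add: bij_is_inj bij_is_surj surj_f_inv_f)
  let ?enum = "\<lambda>v. \<exists>t. eval r [prod_encode (c, t)] v"
  have values_at_iff: "w \<in> values_at f x \<longleftrightarrow> ?enum (inv \<rho> w)" for w
    using f[of _ "inv \<rho> w"] by (simp add: values_at_def inv_\<rho>)
  have "(\<forall>w\<in>values_at f x. w = \<rho> m \<or> lt w (\<rho> m)) \<longleftrightarrow>
      (\<forall>v. ?enum v \<longrightarrow> v = m \<or> lt (\<rho> v) (\<rho> m))"
  proof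
    assume "\<forall>w\<in>values_at f x. w = \<rho> m \<or> lt w (\<rho> m)"
    then show "\<forall>v. ?enum v \<longrightarrow> v = m \<or> lt (\<rho> v) (\<rho> m)"
      using values_at_iff[of "\<rho> _"] by (metis inv_\<rho>(1))
  next
    assume "\<forall>v. ?enum v \<longrightarrow> v = m \<or> lt (\<rho> v) (\<rho> m)"
    then show "\<forall>w\<in>values_at f x. w = \<rho> m \<or> lt w (\<rho> m)"
      using values_at_iff by (metis inv_\<rho>(2))
  qed
  moreover have "\<rho> m \<in> values_at f x \<longleftrightarrow> ?enum m"
    using values_at_iff[of "\<rho> m"] by (simp add: inv_\<rho>)
  ultimately show ?thesis
    unfolding maxD_eq_Some_iff[where lt=lt and f=f and x=x, OF irrefl trans mono] by blast
qed

lemma MaxPR_complexity: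
  assumes bij: "bij \<rho>" and irrefl: "\<forall>x. \<not> lt x x" and trans: "\<forall>x y z. lt x y \<longrightarrow> lt y z \<longrightarrow> lt x z"
    and lt: "decidable_rel 2 (\<lambda>ys. lt (\<rho> (ys ! 0)) (\<rho> (ys ! 1)))"
    and g: "g \<in> MaxPR ks lt \<rho>"
  shows "rel_Sigma1_and_Pi1 ks \<rho> (graph_on ks g) \<and> set_Sigma 2 ks (dom_on ks g)"
proof -
  obtain f where pc: "pcomp2 ks \<rho> f" and mono: "mono_incr ks lt f"
    and g_eq: "\<forall>x\<in>bspace ks. g x = maxD lt f x"
    using g unfolding MaxPR_def by blast
  obtain r where f: "\<And>x t m. x \<in> bspace ks \<Longrightarrow> f x t = Some (\<rho> m) \<longleftrightarrow> eval r [prod_encode (code x, t)] m"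
    using pcomp2_eval[OF pc bij] by blast
  show ?thesis
  proof (rule graph_and_domain_complexity[OF bij sigma1_rel_attained[of r]
        sigma1_rel_exceeded[OF lt, of r]])
    fix x m assume x: "x \<in> bspace ks"
    have "\<forall>t t' a b. t \<le> t' \<longrightarrow> f x t = Some a \<longrightarrow> f x t' = Some b \<longrightarrow> a = b \<or> lt a b"
      using mono x unfolding mono_incr_def by blast
    from maxD_eq_Some_iff_eval[where f=f and x=x, OF bij irrefl trans this f[OF x]]
    show "g x = Some (\<rho> m) \<longleftrightarrow> (\<lambda>ys. \<exists>t. eval r [prod_encode (ys ! 0, t)] (ys ! 1)) [code x, m] \<and>
        \<not> (\<lambda>ys. \<exists>t v. eval r [prod_encode (ys ! 0, t)] v \<and> v \<noteq> ys ! 1 \<and>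
          \<not> lt (\<rho> v) (\<rho> (ys ! 1))) [code x, m]"
      using g_eq x by simp
  qed
qed

theorem mainTheorem12:
  fixes ks :: "bkind list" and lt :: "'d \<Rightarrow> 'd \<Rightarrow> bool" and \<rho> :: "nat \<Rightarrow> 'd"
    and g :: "bval list \<Rightarrow> 'd option"
  assumes "ks \<noteq> []"
    and "comp_poset lt \<rho>"
    and "g \<in> MaxPR ks lt \<rho> \<or> g \<in> MinPR ks lt \<rho>"
  shows "rel_Sigma1_and_Pi1 ks \<rho> (graph_on ks g) \<and> set_Sigma 2 ks (dom_on ks g)"
proof -
  have bij: "bij \<rho>" and irrefl: "\<forall>x. \<not> lt x x" and trans: "\<forall>x y z. lt x y \<longrightarrow> lt y z \<longrightarrow> lt x z"
    and computable: "computable_set {c. lt (\<rho> (fst (prod_decode c))) (\<rho> (snd (prod_decode c)))}"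
    using assms(2) unfolding comp_poset_def by auto
  have lt: "decidable_rel 2 (\<lambda>ys. lt (\<rho> (ys ! 0)) (\<rho> (ys ! 1)))"
    using decidable_rel_of_computable_pairs[where P="\<lambda>a b. lt (\<rho> a) (\<rho> b)"] computable by simp
  from decidable_rel_compose[OF lt total_recursive_list_swap]
  have gt: "decidable_rel 2 (\<lambda>ys. lt (\<rho> (ys ! 1)) (\<rho> (ys ! 0)))" by simp
  from assms(3) show ?thesis
  proof
    assume "g \<in> MaxPR ks lt \<rho>"
    then show ?thesis by (rule MaxPR_complexity[OF bij irrefl trans lt])
  next
    assume "g \<in> MinPR ks lt \<rho>"
    then have "g \<in> MaxPR ks (\<lambda>a b. lt b a) \<rho>" unfolding MinPR_eq_MaxPR_converse .
    from MaxPR_complexity[OF bij _ _ gt this] show ?thesis using irrefl trans by blast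
  qed
qed

end
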